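(* Fix integers $m\ge 1$ and $\theta\in(0,1]$, and let $f$ be a homogeneous voting rule. Suppose there is a neighborhood $U$ of the expected normalized profile $\hat P$ (in the space of normalized continuous profiles on $\{1,\dots,m\}$, with the topology of weight vectors in $\mathbb R^{m!}$) such that $f$ is unison-manipulable (UM) in every continuous profile of $U$. Then $\lim_{n\to\infty}\rho(f,m,n,\theta)=1$.
   Context: A ranking over a finite candidate set is a strict total order on it. A discrete profile $P$ consists of a finite nonempty candidate set, a finite nonempty voter set of size $n$, and a ranking $P_v$ for each voter $v$; $w(p,P)$ is the number of voters with ranking $p$, $w(P)=n$. A continuous profile consists of a candidate set, a total weight $w(P)>0$ and weights $w(p,P)\ge0$ for each ranking $p$ summing to $w(P)$. The normalized profile $\bar P$ has weights $w(p,P)/w(P)$. Profiles on a fixed candidate set are identified with their weight vectors in $\mathbb R^{m!}$. A voting rule maps every profile (discrete or continuous) to one of its candidates; it is homogeneous if $f(P)=f(\bar P)$ always. CM (discrete): $f$ is CM in discrete $P$ if there is a discrete $Q$ with the same candidates and voters, $f(Q)\ne f(P)$, and every voter $v$ with $Q_v\ne P_v$ prefers $f(Q)$ to $f(P)$ according to $P_v$. UM: $f$ is unison-manipulable in a (discrete or continuous) profile $P$ if there exist a candidate $c\ne f(P)$ and a ranking $q$ such that, in the profile $Q$ obtained from $P$ by moving all the weight of the rankings that prefer $c$ to $f(P)$ onto the single ranking $q$ (other weights unchanged), $f(Q)=c$. Perturbed Culture with parameters $m,n\ge1$ and $\theta\in(0,1]$: a random discrete profile with candidates $\{1,\dots,m\}$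 and voters $\{1,\dots,n\}$, each voter independently having ranking $1\succ\cdots\succ m$ with probability $\theta$ and a uniformly random ranking with probability $1-\theta$. The expected normalized profile $\hat P$ has total weight $1$, weight $\theta+\frac{1-\theta}{m!}$ on $1\succ\cdots\succ m$ and $\frac{1-\theta}{m!}$ on every other ranking. The CM rate $\rho(f,m,n,\theta)$ is the probability that $f$ is CM (in the discrete sense) in a profile drawn from this model. *)

theory Defs
  imports "HOL-Analysis.Analysis"
begin

text \<open>A ranking is a list of the candidates without repetition,
  best candidate first. Profiles on candidate set 1..m are weight vectors
  indexed by rankings (functions nat list => real vanishing outside rankings).\<close>

definition rankings :: "nat \<Rightarrow> nat list set" where
  "rankings m = {p. distinct p \<and> set p = {1..m}}"

definition prefers :: "nat list \<Rightarrow> nat \<Rightarrow> nat \<Rightarrow> bool" where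
  "prefers p a b \<longleftrightarrow> (\<exists>i j. i < j \<and> j < length p \<and> p ! i = a \<and> p ! j = b)"

definition total_weight :: "nat \<Rightarrow> (nat list \<Rightarrow> real) \<Rightarrow> real" where
  "total_weight m w = (\<Sum>p\<in>rankings m. w p)"

definition cprofile :: "nat \<Rightarrow> (nat list \<Rightarrow> real) \<Rightarrow> bool" where
  "cprofile m w \<longleftrightarrow> (\<forall>p\<in>rankings m. w p \<ge> 0) \<and> (\<forall>p. p \<notin> rankings m \<longrightarrow> w p = 0)
     \<and> total_weight m w > 0"

definition normalize :: "nat \<Rightarrow> (nat list \<Rightarrow> real) \<Rightarrow> (nat list \<Rightarrow> real)" where
  "normalize m w = (\<lambda>p. w p / total_weight m w)"

definition normalized_profile :: "nat \<Rightarrow> (nat list \<Rightarrow> real) \<Rightarrow> bool" where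
  "normalized_profile m w \<longleftrightarrow> cprofile m w \<and> total_weight m w = 1"

definition voting_rule :: "nat \<Rightarrow> ((nat list \<Rightarrow> real) \<Rightarrow> nat) \<Rightarrow> bool" where
  "voting_rule m f \<longleftrightarrow> (\<forall>w. cprofile m w \<longrightarrow> f w \<in> {1..m})"

definition homogeneous :: "nat \<Rightarrow> ((nat list \<Rightarrow> real) \<Rightarrow> nat) \<Rightarrow> bool" where
  "homogeneous m f \<longleftrightarrow> (\<forall>w. cprofile m w \<longrightarrow> f w = f (normalize m w))"

definition dprofiles :: "nat \<Rightarrow> nat \<Rightarrow> (nat \<Rightarrow> nat list) set" where
  "dprofiles m n = PiE {1..n} (\<lambda>_. rankings m)"

definition dweights :: "nat \<Rightarrow> (nat \<Rightarrow> nat list) \<Rightarrow> (nat list \<Rightarrow> real)" where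
  "dweights n P = (\<lambda>p. real (card {v\<in>{1..n}. P v = p}))"

definition CM :: "nat \<Rightarrow> nat \<Rightarrow> ((nat list \<Rightarrow> real) \<Rightarrow> nat) \<Rightarrow> (nat \<Rightarrow> nat list) \<Rightarrow> bool" where
  "CM m n f P \<longleftrightarrow> (\<exists>Q\<in>dprofiles m n.
      f (dweights n Q) \<noteq> f (dweights n P) \<and>
      (\<forall>v\<in>{1..n}. Q v \<noteq> P v \<longrightarrow> prefers (P v) (f (dweights n Q)) (f (dweights n P))))"

definition unison_move :: "nat \<Rightarrow> (nat list \<Rightarrow> real) \<Rightarrow> nat \<Rightarrow> nat \<Rightarrow> nat list \<Rightarrow> (nat list \<Rightarrow> real)" where
  "unison_move m w b c q = (\<lambda>p.
      (if prefers p c b then 0 else w p) +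
      (if p = q then (\<Sum>r\<in>{r\<in>rankings m. prefers r c b}. w r) else 0))"

definition UM :: "nat \<Rightarrow> ((nat list \<Rightarrow> real) \<Rightarrow> nat) \<Rightarrow> (nat list \<Rightarrow> real) \<Rightarrow> bool" where
  "UM m f w \<longleftrightarrow> (\<exists>c\<in>{1..m}. \<exists>q\<in>rankings m.
      c \<noteq> f w \<and> f (unison_move m w (f w) c q) = c)"

definition identity_ranking :: "nat \<Rightarrow> nat list" where
  "identity_ranking m = [1..<m+1]"

text \<open>Expected normalized profile of Perturbed Culture.\<close>
definition hatP :: "nat \<Rightarrow> real \<Rightarrow> (nat list \<Rightarrow> real)" where
  "hatP m \<theta> = (\<lambda>p. if p \<in> rankings m then
       (if p = identity_ranking m then \<theta> else 0) + (1 - \<theta>) / fact m else 0)"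

text \<open>Probability that a single voter has ranking p under Perturbed Culture.\<close>
definition pc_prob :: "nat \<Rightarrow> real \<Rightarrow> nat list \<Rightarrow> real" where
  "pc_prob m \<theta> p = (if p = identity_ranking m then \<theta> else 0) + (1 - \<theta>) / fact m"

definition CM_rate :: "((nat list \<Rightarrow> real) \<Rightarrow> nat) \<Rightarrow> nat \<Rightarrow> nat \<Rightarrow> real \<Rightarrow> real" where
  "CM_rate f m n \<theta> = (\<Sum>P\<in>{P\<in>dprofiles m n. CM m n f P}. \<Prod>v\<in>{1..n}. pc_prob m \<theta> (P v))"

end

theory Submission
  imports Defs "HOL-Combinatorics.Multiset_Permutations"
begin

text \<open>If \<open>f\<close> is unison-manipulable in the normalized profile of a discrete profile \<open>P\<close>, with
  manipulated winner \<open>c\<close> and ranking \<open>q\<close>, then letting exactly the voters who prefer \<open>c\<close> to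
  \<open>f P\<close> switch to \<open>q\<close> yields a discrete profile whose normalization is the manipulated
  profile; by homogeneity its winner is \<open>c\<close>, so \<open>f\<close> is coalitionally manipulable in \<open>P\<close>.
  Under Perturbed Culture the count of each ranking \<open>p\<close> is a sum of \<open>n\<close> independent
  indicators, each with mean \<open>\<hat>P p\<close>, so Chebyshev's inequality and a union bound over the rankings
  show that the normalized profile lies within \<open>\<epsilon>\<close> of \<open>\<hat>P\<close> with probability at least
  \<open>1 - 1 / (n \<epsilon>\<^sup>2)\<close>.\<close>

lemma sum_PiE_prod_factor:
  fixes pc :: "'b \<Rightarrow> real" and g :: "'a \<Rightarrow> 'b \<Rightarrow> real"
  assumes "finite V" "finite R" "S \<subseteq> V" "sum pc R = 1"
  shows "(\<Sum>P\<in>PiE V (\<lambda>_. R). (\<Prod>u\<in>V. pc (P u)) * (\<Prod>u\<in>S. g u (P u)))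
       = (\<Prod>u\<in>S. \<Sum>y\<in>R. pc y * g u y)"
proof -
  define k where "k u y = (if u \<in> S then pc y * g u y else pc y)" for u y
  have restrict: "(\<Prod>u\<in>S. F u) = (\<Prod>u\<in>V. if u \<in> S then F u else 1)" for F :: "'a \<Rightarrow> real"
    using prod.inter_restrict[OF \<open>finite V\<close>, of F S] \<open>S \<subseteq> V\<close> by (simp add: Int_absorb1)
  have "(\<Prod>u\<in>V. pc (P u)) * (\<Prod>u\<in>S. g u (P u)) = (\<Prod>u\<in>V. k u (P u))" for P :: "'a \<Rightarrow> 'b"
    by (simp add: restrict prod.distrib[symmetric] k_def if_distrib cong: if_cong)
  then have "(\<Sum>P\<in>PiE V (\<lambda>_. R). (\<Prod>u\<in>V. pc (P u)) * (\<Prod>u\<in>S. g u (P u)))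
      = (\<Prod>u\<in>V. \<Sum>y\<in>R. k u y)"
    using prod_sum_PiE[of V "\<lambda>_. R" k] assms(1,2) by simp
  also have "\<dots> = (\<Prod>u\<in>V. if u \<in> S then \<Sum>y\<in>R. pc y * g u y else 1)"
    by (intro prod.cong refl) (simp add: k_def assms(4))
  also have "\<dots> = (\<Prod>u\<in>S. \<Sum>y\<in>R. pc y * g u y)"
    by (simp add: restrict)
  finally show ?thesis .
qed

lemma sum_PiE_prod_eq_1:
  fixes pc :: "'b \<Rightarrow> real"
  assumes "finite V" "finite R" "sum pc R = 1"
  shows "(\<Sum>P\<in>PiE V (\<lambda>_. R). \<Prod>u\<in>V. pc (P u)) = 1"
  using sum_PiE_prod_factor[OF assms(1,2) empty_subsetI assms(3)] by simp

lemma sum_PiE_square_sum: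
  fixes pc h :: "'b \<Rightarrow> real"
  assumes "finite V" "finite R" "sum pc R = 1" "(\<Sum>y\<in>R. pc y * h y) = 0"
  shows "(\<Sum>P\<in>PiE V (\<lambda>_. R). (\<Prod>u\<in>V. pc (P u)) * (\<Sum>v\<in>V. h (P v))^2)
       = real (card V) * (\<Sum>y\<in>R. pc y * (h y)^2)"
proof -
  let ?E = "\<lambda>X. \<Sum>P\<in>PiE V (\<lambda>_. R). (\<Prod>u\<in>V. pc (P u)) * X P"
  have pair: "?E (\<lambda>P. h (P v) * h (P w)) = (if v = w then (\<Sum>y\<in>R. pc y * (h y)^2) else 0)"
    if "v \<in> V" "w \<in> V" for v w
  proof (cases "v = w")
    case True
    then show ?thesis
      using sum_PiE_prod_factor[OF assms(1,2) _ assms(3), of "{v}" "\<lambda>_ y. (h y)^2"] that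
      by (simp add: power2_eq_square)
  next
    case False
    then show ?thesis
      using sum_PiE_prod_factor[OF assms(1,2) _ assms(3), of "{v, w}" "\<lambda>_. h"] that assms(4)
      by simp
  qed
  have "?E (\<lambda>P. (\<Sum>v\<in>V. h (P v))^2) = (\<Sum>v\<in>V. \<Sum>w\<in>V. ?E (\<lambda>P. h (P v) * h (P w)))"
  proof -
    have "(\<Sum>v\<in>V. h (P v))^2 = (\<Sum>v\<in>V. \<Sum>w\<in>V. h (P v) * h (P w))" for P :: "'a \<Rightarrow> 'b"
      by (simp add: power2_eq_square sum_product)
    then show ?thesis
      by (simp add: sum_distrib_left sum.swap[of _ "PiE V (\<lambda>_. R)"])
  qed
  also have "\<dots> = real (card V) * (\<Sum>y\<in>R. pc y * (h y)^2)"
    using assms(1) by (simp add: pair)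
  finally show ?thesis .
qed

lemma sum_PiE_count_variance:
  fixes pc :: "'b \<Rightarrow> real"
  assumes "finite V" "finite R" "sum pc R = 1" "p \<in> R"
  shows "(\<Sum>P\<in>PiE V (\<lambda>_. R). (\<Prod>u\<in>V. pc (P u)) * (\<Sum>v\<in>V. of_bool (P v = p) - pc p)^2)
       = real (card V) * (pc p - (pc p)^2)"
proof -
  have delta: "(\<Sum>y\<in>R. pc y * of_bool (y = p)) = pc p"
    using assms(2,4) by (simp add: of_bool_def sum.delta' if_distrib cong: if_cong)
  have centered: "(\<Sum>y\<in>R. pc y * (of_bool (y = p) - pc p)) = 0"
    using delta assms(3) by (simp add: right_diff_distrib sum_subtractf sum_distrib_right[symmetric])
  have "(\<Sum>y\<in>R. pc y * (of_bool (y = p) - pc p)^2)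
      = (\<Sum>y\<in>R. (1 - 2 * pc p) * (pc y * of_bool (y = p)) + (pc p)^2 * pc y)"
    by (intro sum.cong refl) (simp add: of_bool_def power2_eq_square algebra_simps)
  also have "\<dots> = (1 - 2 * pc p) * (\<Sum>y\<in>R. pc y * of_bool (y = p)) + (pc p)^2 * sum pc R"
    by (simp add: sum.distrib sum_distrib_left)
  also have "\<dots> = pc p - (pc p)^2"
    unfolding delta assms(3) by (simp add: power2_eq_square algebra_simps)
  finally show ?thesis
    using sum_PiE_square_sum[OF assms(1-3) centered] by simp
qed

lemma weighted_Chebyshev_union:
  fixes wt :: "'a \<Rightarrow> real" and X :: "'i \<Rightarrow> 'a \<Rightarrow> real"
  assumes "finite D" "finite I" "\<And>x. x \<in> D \<Longrightarrow> wt x \<ge> 0" "t > 0"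
  shows "sum wt {x\<in>D. \<exists>i\<in>I. t \<le> \<bar>X i x\<bar>} \<le> (\<Sum>i\<in>I. \<Sum>x\<in>D. wt x * (X i x)^2) / t^2"
proof -
  have "of_bool (\<exists>i\<in>I. t \<le> \<bar>X i x\<bar>) \<le> (\<Sum>i\<in>I. (X i x)^2 / t^2)" for x
  proof (cases "\<exists>i\<in>I. t \<le> \<bar>X i x\<bar>")
    case True
    then obtain i where "i \<in> I" "t \<le> \<bar>X i x\<bar>" by blast
    then have "1 \<le> (X i x)^2 / t^2"
      using \<open>t > 0\<close> by (simp add: abs_le_square_iff[symmetric])
    also have "\<dots> \<le> (\<Sum>i\<in>I. (X i x)^2 / t^2)"
      using \<open>i \<in> I\<close> assms(2) by (intro member_le_sum) auto
    finally show ?thesis using True by simp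
  qed (simp add: sum_nonneg)
  then have "(\<Sum>x\<in>D. wt x * of_bool (\<exists>i\<in>I. t \<le> \<bar>X i x\<bar>))
      \<le> (\<Sum>x\<in>D. wt x * (\<Sum>i\<in>I. (X i x)^2 / t^2))"
    using assms(3) by (intro sum_mono mult_left_mono) auto
  then show ?thesis
    using assms(1)
    by (simp add: sum.inter_filter sum_distrib_left sum_divide_distrib sum.swap[of _ D]
        of_bool_def if_distrib cong: if_cong)
qed

lemma rankings_eq_permutations_of_set: "rankings m = permutations_of_set {1..m}"
  by (auto simp: rankings_def permutations_of_set_def)

lemma finite_rankings: "finite (rankings m)"
  by (simp add: rankings_eq_permutations_of_set)

lemma card_rankings: "card (rankings m) = fact m"
  by (simp add: rankings_eq_permutations_of_set)

lemma identity_ranking_in_rankings: "identity_ranking m \<in> rankings m"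
  by (auto simp: rankings_def identity_ranking_def)

lemma pc_prob_nonneg: "0 \<le> \<theta> \<Longrightarrow> \<theta> \<le> 1 \<Longrightarrow> 0 \<le> pc_prob m \<theta> p"
  by (simp add: pc_prob_def)

lemma sum_pc_prob: "(\<Sum>p\<in>rankings m. pc_prob m \<theta> p) = 1"
  using identity_ranking_in_rankings[of m]
  by (simp add: pc_prob_def sum.distrib finite_rankings card_rankings)

lemma hatP_eq_pc_prob: "p \<in> rankings m \<Longrightarrow> hatP m \<theta> p = pc_prob m \<theta> p"
  by (simp add: hatP_def pc_prob_def)

lemma dprofile_in_rankings: "P \<in> dprofiles m n \<Longrightarrow> v \<in> {1..n} \<Longrightarrow> P v \<in> rankings m"
  by (auto simp: dprofiles_def PiE_iff)

lemma dweights_eq_sum: "dweights n P p = (\<Sum>v\<in>{1..n}. of_bool (P v = p))"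
proof -
  have "{v\<in>{1..n}. P v = p} = {1..n} \<inter> {v. P v = p}" by auto
  then show ?thesis by (simp add: dweights_def)
qed

lemma sum_dweights:
  assumes "P \<in> dprofiles m n" "A \<subseteq> rankings m"
  shows "(\<Sum>p\<in>A. dweights n P p) = (\<Sum>v\<in>{1..n}. of_bool (P v \<in> A))"
proof -
  have "(\<Sum>p\<in>A. dweights n P p) = (\<Sum>v\<in>{1..n}. \<Sum>p\<in>A. (of_bool (P v = p) :: real))"
    unfolding dweights_eq_sum by (rule sum.swap)
  also have "\<dots> = (\<Sum>v\<in>{1..n}. of_bool (P v \<in> A))"
    using finite_subset[OF assms(2) finite_rankings]
    by (intro sum.cong refl) (simp add: of_bool_def sum.delta)
  finally show ?thesis .
qed

lemma total_weight_dweights: "P \<in> dprofiles m n \<Longrightarrow> total_weight m (dweights n P) = n"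
  using sum_dweights[of P m n "rankings m"] dprofile_in_rankings[of P m n]
  by (simp add: total_weight_def del: sum_of_bool_eq)

lemma cprofile_dweights:
  assumes "P \<in> dprofiles m n" "n \<ge> 1"
  shows "cprofile m (dweights n P)"
proof -
  have "dweights n P p = 0" if "p \<notin> rankings m" for p
    using dprofile_in_rankings[OF assms(1)] that by (auto simp: dweights_def)
  then show ?thesis
    using total_weight_dweights[OF assms(1)] assms(2) by (auto simp: cprofile_def dweights_def)
qed

lemma normalize_dweights:
  "P \<in> dprofiles m n \<Longrightarrow> normalize m (dweights n P) = (\<lambda>p. dweights n P p / n)"
  by (simp add: normalize_def total_weight_dweights)

lemma normalized_profile_normalize_dweights:
  assumes "P \<in> dprofiles m n" "n \<ge> 1"
  shows "normalized_profile m (normalize m (dweights n P))"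
  using cprofile_dweights[OF assms] total_weight_dweights[OF assms(1)] assms(2)
  by (auto simp: normalized_profile_def cprofile_def normalize_dweights[OF assms(1)]
      total_weight_def sum_divide_distrib[symmetric])

lemma unison_move_scale:
  "unison_move m (\<lambda>p. w p / t) b c q = (\<lambda>p. unison_move m w b c q p / t)"
  by (auto simp: unison_move_def sum_divide_distrib[symmetric] add_divide_distrib)

lemma dweights_unison_coalition:
  assumes P: "P \<in> dprofiles m n"
  shows "dweights n (\<lambda>v. if v \<in> {1..n} \<and> prefers (P v) c b then q else P v)
       = unison_move m (dweights n P) b c q"
proof
  fix p
  let ?pr = "\<lambda>r. prefers r c b"
  let ?A = "{r\<in>rankings m. ?pr r}"
  have coalition: "(\<Sum>r\<in>?A. dweights n P r) = (\<Sum>v\<in>{1..n}. of_bool (P v \<in> ?A))"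
    by (rule sum_dweights[OF P]) auto
  have "dweights n (\<lambda>v. if v \<in> {1..n} \<and> ?pr (P v) then q else P v) p
      = (\<Sum>v\<in>{1..n}. of_bool (P v \<in> ?A) * of_bool (q = p) + of_bool (\<not> ?pr p) * of_bool (P v = p))"
    unfolding dweights_eq_sum using dprofile_in_rankings[OF P] by (intro sum.cong refl) auto
  also have "\<dots> = (\<Sum>r\<in>?A. dweights n P r) * of_bool (q = p) + of_bool (\<not> ?pr p) * dweights n P p"
    unfolding coalition unfolding dweights_eq_sum
    by (simp only: sum.distrib sum_distrib_left sum_distrib_right)
  also have "\<dots> = unison_move m (dweights n P) b c q p"
    by (auto simp: unison_move_def)
  finally show "dweights n (\<lambda>v. if v \<in> {1..n} \<and> ?pr (P v) then q else P v) p
      = unison_move m (dweights n P) b c q p" .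
qed

lemma CM_if_UM_normalize_dweights:
  assumes hom: "homogeneous m f" and P: "P \<in> dprofiles m n" and n: "n \<ge> 1"
    and UM: "UM m f (normalize m (dweights n P))"
  shows "CM m n f P"
proof -
  define b where "b = f (dweights n P)"
  have "f (normalize m (dweights n P)) = b"
    using hom cprofile_dweights[OF P n] by (simp add: homogeneous_def b_def)
  then obtain c q where c: "c \<noteq> b" and q: "q \<in> rankings m"
    and fc: "f (unison_move m (normalize m (dweights n P)) b c q) = c"
    using UM unfolding UM_def by metis
  define Q where "Q = (\<lambda>v. if v \<in> {1..n} \<and> prefers (P v) c b then q else P v)"
  have Q: "Q \<in> dprofiles m n"
    using P q by (auto simp: dprofiles_def Q_def PiE_iff extensional_def)
  have dweights_Q: "dweights n Q = unison_move m (dweights n P) b c q"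
    unfolding Q_def by (rule dweights_unison_coalition[OF P])
  have "normalize m (dweights n Q) = (\<lambda>p. dweights n Q p / n)"
    by (rule normalize_dweights[OF Q])
  also have "\<dots> = unison_move m (normalize m (dweights n P)) b c q"
    unfolding dweights_Q normalize_dweights[OF P] unison_move_scale ..
  finally have fQ: "f (dweights n Q) = c"
    using hom cprofile_dweights[OF Q n] fc by (simp add: homogeneous_def)
  show ?thesis
    unfolding CM_def
    using Q c fQ by (intro bexI[of _ Q]) (auto simp: Q_def b_def)
qed

lemma CM_if_dweights_near:
  assumes hom: "homogeneous m f" and P: "P \<in> dprofiles m n" and n: "n \<ge> 1"
    and UM_near: "\<forall>w. normalized_profile m w \<and> (\<forall>p\<in>rankings m. \<bar>w p - hatP m \<theta> p\<bar> < \<epsilon>)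
                    \<longrightarrow> UM m f w"
    and near: "\<forall>p\<in>rankings m. \<bar>dweights n P p - n * pc_prob m \<theta> p\<bar> < n * \<epsilon>"
  shows "CM m n f P"
proof -
  have "\<bar>normalize m (dweights n P) p - hatP m \<theta> p\<bar> < \<epsilon>" if "p \<in> rankings m" for p
  proof -
    have "dweights n P p - n * pc_prob m \<theta> p = n * (normalize m (dweights n P) p - hatP m \<theta> p)"
      using P n that by (simp add: normalize_dweights hatP_eq_pc_prob field_simps)
    then show ?thesis
      using near that n by (auto simp: abs_mult)
  qed
  then have "UM m f (normalize m (dweights n P))"
    using UM_near normalized_profile_normalize_dweights[OF P n] by blast
  then show ?thesis
    by (rule CM_if_UM_normalize_dweights[OF hom P n])
qed

lemma CM_rate_le_1:
  assumes "0 \<le> \<theta>" "\<theta> \<le> 1"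
  shows "CM_rate f m n \<theta> \<le> 1"
proof -
  let ?wt = "\<lambda>P. \<Prod>v\<in>{1..n}. pc_prob m \<theta> (P v)"
  have "CM_rate f m n \<theta> \<le> sum ?wt (dprofiles m n)"
    unfolding CM_rate_def using assms
    by (intro sum_mono2) (auto simp: dprofiles_def finite_PiE finite_rankings pc_prob_nonneg prod_nonneg)
  also have "\<dots> = 1"
    unfolding dprofiles_def by (intro sum_PiE_prod_eq_1 finite_rankings sum_pc_prob) simp
  finally show ?thesis .
qed

lemma CM_rate_lower_bound:
  assumes \<theta>: "0 \<le> \<theta>" "\<theta> \<le> 1" and hom: "homogeneous m f" and \<epsilon>: "\<epsilon> > 0" and n: "n \<ge> 1"
    and UM_near: "\<forall>w. normalized_profile m w \<and> (\<forall>p\<in>rankings m. \<bar>w p - hatP m \<theta> p\<bar> < \<epsilon>)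
                    \<longrightarrow> UM m f w"
  shows "1 - 1 / (real n * \<epsilon>^2) \<le> CM_rate f m n \<theta>"
proof -
  define R where "R = rankings m"
  define pc where "pc = pc_prob m \<theta>"
  define D where "D = dprofiles m n"
  define wt where "wt P = (\<Prod>v\<in>{1..n}. pc (P v))" for P :: "nat \<Rightarrow> nat list"
  define X where "X p P = (\<Sum>v\<in>{1..n}. of_bool (P v = p) - pc p)" for p P
  have finR: "finite R" and sum_pc: "sum pc R = 1" and pc_nonneg: "\<And>p. 0 \<le> pc p"
    using \<theta> by (simp_all add: R_def pc_def finite_rankings sum_pc_prob pc_prob_nonneg)
  have D_eq: "D = PiE {1..n} (\<lambda>_. R)" and finD: "finite D"
    by (simp_all add: D_def R_def dprofiles_def finite_PiE finite_rankings)
  have wt_nonneg: "0 \<le> wt P" for P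
    by (simp add: wt_def pc_nonneg prod_nonneg)
  have bad: "{P\<in>D. \<not> CM m n f P} \<subseteq> {P\<in>D. \<exists>p\<in>R. n * \<epsilon> \<le> \<bar>X p P\<bar>}"
  proof safe
    fix P assume P: "P \<in> D" and not_CM: "\<not> CM m n f P"
    have "X p P = dweights n P p - n * pc p" for p
      by (simp add: X_def sum_subtractf dweights_eq_sum del: sum_of_bool_eq)
    then show "\<exists>p\<in>R. n * \<epsilon> \<le> \<bar>X p P\<bar>"
      using CM_if_dweights_near[OF hom _ n UM_near] P not_CM
      by (force simp: D_def R_def pc_def not_le[symmetric])
  qed
  have variance: "(\<Sum>P\<in>D. wt P * (X p P)^2) \<le> n * pc p" if "p \<in> R" for p
    using sum_PiE_count_variance[OF _ finR sum_pc that, of "{1..n}"]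
    by (simp add: D_eq wt_def X_def right_diff_distrib)
  have "1 - CM_rate f m n \<theta> = sum wt {P\<in>D. \<not> CM m n f P}"
  proof -
    have "sum wt D = 1"
      unfolding D_eq wt_def by (rule sum_PiE_prod_eq_1[OF _ finR sum_pc]) simp
    moreover have "{P\<in>D. \<not> CM m n f P} = D - {P\<in>D. CM m n f P}" by auto
    ultimately show ?thesis
      using finD by (simp add: CM_rate_def D_def wt_def pc_def sum_diff)
  qed
  also have "\<dots> \<le> sum wt {P\<in>D. \<exists>p\<in>R. n * \<epsilon> \<le> \<bar>X p P\<bar>}"
    using finD bad wt_nonneg by (intro sum_mono2) auto
  also have "\<dots> \<le> (\<Sum>p\<in>R. \<Sum>P\<in>D. wt P * (X p P)^2) / (n * \<epsilon>)^2"
    using finD finR wt_nonneg \<epsilon> n by (intro weighted_Chebyshev_union) auto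
  also have "\<dots> \<le> (\<Sum>p\<in>R. n * pc p) / (n * \<epsilon>)^2"
    by (intro divide_right_mono sum_mono variance) auto
  also have "\<dots> = 1 / (real n * \<epsilon>^2)"
    using n \<epsilon> by (simp add: sum_distrib_left[symmetric] sum_pc power2_eq_square)
  finally show ?thesis by simp
qed

theorem lemma3p2:
  fixes m :: nat and \<theta> :: real and f :: "(nat list \<Rightarrow> real) \<Rightarrow> nat"
  assumes "m \<ge> 1" and "0 < \<theta>" and "\<theta> \<le> 1"
    and "voting_rule m f" and "homogeneous m f"
    and "\<exists>\<epsilon>>0. \<forall>w. normalized_profile m w \<and> (\<forall>p\<in>rankings m. \<bar>w p - hatP m \<theta> p\<bar> < \<epsilon>)
                \<longrightarrow> UM m f w"
  shows "(\<lambda>n. CM_rate f m n \<theta>) \<longlonglongrightarrow> 1"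
proof -
  obtain \<epsilon> where \<epsilon>: "\<epsilon> > 0"
    and UM_near: "\<forall>w. normalized_profile m w \<and> (\<forall>p\<in>rankings m. \<bar>w p - hatP m \<theta> p\<bar> < \<epsilon>)
                    \<longrightarrow> UM m f w"
    using assms(6) by blast
  have "(\<lambda>n. 1 - (1 / \<epsilon>^2) / real n) \<longlonglongrightarrow> 1 - 0"
    by (intro tendsto_diff tendsto_const lim_const_over_n)
  then have lower_limit: "(\<lambda>n. 1 - 1 / (real n * \<epsilon>^2)) \<longlonglongrightarrow> 1"
    by (simp add: mult.commute)
  have "\<forall>\<^sub>F n in sequentially. 1 - 1 / (real n * \<epsilon>^2) \<le> CM_rate f m n \<theta>"
    using eventually_ge_at_top[of 1]
    by eventually_elim (use assms(2,3,5) \<epsilon> UM_near in \<open>auto intro: CM_rate_lower_bound\<close>)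
  moreover have "\<forall>\<^sub>F n in sequentially. CM_rate f m n \<theta> \<le> 1"
    using assms(2,3) by (intro always_eventually allI CM_rate_le_1) auto
  ultimately show ?thesis
    using lower_limit by (rule tendsto_sandwich) simp
qed

end
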